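(* Let $R>0$, $n\ge2$, and let $u,\tilde u$ be radially symmetric functions with $u,\tilde u\in C^{2,1}((B_R\setminus\{0\})\times(0,\infty))\cap C(\overline{B_R}\times[0,\infty))$, $\sup u_r\le0$, $\sup\tilde u_r\le0$, which both solve $(\ast)$ with the same initial datum $u_0$. Then $u=\tilde u$.
   Context: $B_R=\{x\in\mathbb R^n:|x|<R\}$; radial functions written in $r=|x|$, subscript $r$ = radial derivative. $u^*(r):=-\sqrt[3]{9n-15}\,r^{1/3}$. Problem $(\ast)$: $u_t=\Delta u+uu_r^3$ in $(B_R\setminus\{0\})\times(0,\infty)$, $u(0,t)=0$ and $u(R,t)=u^*(R)$ for $t>0$, $u(\cdot,0)=u_0$ in $\overline{B_R}$. *)

theory Defs
  imports "HOL-Analysis.Analysis"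
begin

text \<open>Radial functions are written as functions of r = |x| and t.
  The steady state u*(r) = - cbrt(9n-15) r^(1/3).\<close>

definition ustar :: "nat \<Rightarrow> real \<Rightarrow> real" where
  "ustar n r = - root 3 (9 * real n - 15) * r powr (1/3)"

text \<open>The punctured space-time domain (B_R minus 0) x (0,inf), in radial coordinates.\<close>

definition dom_int :: "real \<Rightarrow> (real \<times> real) set" where
  "dom_int R = {0<..<R} \<times> {0<..}"

text \<open>u (radial) is a C^{2,1} function on the punctured domain, continuous up to
  the closure [0,R] x [0,inf), with sup u_r \<le> 0, and solves problem (*):
  u_t = u_rr + (n-1)/r u_r + u u_r^3 (the radial form of u_t = Delta u + u u_r^3),
  u(0,t) = 0, u(R,t) = u*(R) for t > 0, and u(r,0) = u0(r) for 0 \<le> r \<le> R.\<close>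

definition radial_solution ::
  "nat \<Rightarrow> real \<Rightarrow> (real \<Rightarrow> real) \<Rightarrow> (real \<Rightarrow> real \<Rightarrow> real) \<Rightarrow> bool" where
  "radial_solution n R u0 u \<longleftrightarrow>
     continuous_on ({0..R} \<times> {0..}) (\<lambda>(r,t). u r t) \<and>
     (\<exists>ur urr ut.
        continuous_on (dom_int R) (\<lambda>(r,t). ur r t) \<and>
        continuous_on (dom_int R) (\<lambda>(r,t). urr r t) \<and>
        continuous_on (dom_int R) (\<lambda>(r,t). ut r t) \<and>
        (\<forall>(r,t)\<in>dom_int R.
           ((\<lambda>s. u s t) has_real_derivative ur r t) (at r) \<and>
           ((\<lambda>s. ur s t) has_real_derivative urr r t) (at r) \<and>
           ((\<lambda>s. u r s) has_real_derivative ut r t) (at t) \<and>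
           ut r t = urr r t + (real n - 1) / r * ur r t + u r t * (ur r t) ^ 3 \<and>
           ur r t \<le> 0)) \<and>
     (\<forall>t>0. u 0 t = 0 \<and> u R t = ustar n R) \<and>
     (\<forall>r\<in>{0..R}. u r 0 = u0 r)"

end

theory Submission
  imports Defs
begin

text \<open>If u > v somewhere, the continuous function e^{-t}(u - v) attains a
  positive maximum on a rectangle [0,R] x [0,t1]; the boundary and initial data force it into
  the open domain. There w = u - v has w_r = 0, w_rr \<le> 0 and, since the maximum is taken
  backwards in time, w_t \<ge> w > 0. But w_r = 0 kills the gradient term and the nonlinearity
  becomes w u_r^3 \<le> 0 because u_r \<le> 0, so the equation gives w_t \<le> 0.\<close>

lemma DERIV_interior_max:
  fixes f f' :: "real \<Rightarrow> real"
  assumes "a < x" "x < b"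
    and f': "\<And>y. a < y \<Longrightarrow> y < b \<Longrightarrow> (f has_real_derivative f' y) (at y)"
    and f'': "(f' has_real_derivative f'') (at x)"
    and max: "\<And>y. a < y \<Longrightarrow> y < b \<Longrightarrow> f y \<le> f x"
  shows "f' x = 0" and "f'' \<le> 0"
proof -
  show f'x: "f' x = 0"
  proof (rule DERIV_local_max[OF f'[OF assms(1,2)]])
    show "0 < min (x - a) (b - x)" using assms(1,2) by simp
    show "\<forall>y. \<bar>x - y\<bar> < min (x - a) (b - x) \<longrightarrow> f y \<le> f x"
      using max by (auto simp: abs_if split: if_splits)
  qed
  show "f'' \<le> 0"
  proof (rule ccontr)
    assume "\<not> f'' \<le> 0"
    then obtain e where "e > 0" and inc: "\<And>h. 0 < h \<Longrightarrow> h < e \<Longrightarrow> f' x < f' (x + h)"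
      using DERIV_pos_inc_right[OF f''] by force
    define h where "h = min (e/2) ((b - x)/2)"
    have h: "0 < h" "h < e" "x + h < b"
      unfolding h_def using \<open>e > 0\<close> \<open>x < b\<close> by (auto simp: min_def field_simps)
    obtain y where y: "x < y" "y < x + h" and mvt: "f (x + h) - f x = h * f' y"
      using MVT2[of x "x + h" f f'] h f' \<open>a < x\<close> by auto
    have "f' y > 0" using inc[of "y - x"] y h f'x by auto
    with mvt h have "f (x + h) > f x" by (simp add: algebra_simps)
    with max[of "x + h"] h \<open>a < x\<close> show False by simp
  qed
qed

lemma DERIV_left_max_nonneg:
  fixes f :: "real \<Rightarrow> real"
  assumes D: "(f has_real_derivative D) (at t)" and "\<delta> > 0"
    and max: "\<And>s. t - \<delta> < s \<Longrightarrow> s \<le> t \<Longrightarrow> f s \<le> f t"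
  shows "D \<ge> 0"
proof (rule ccontr)
  assume "\<not> D \<ge> 0"
  then obtain e where "e > 0" and dec: "\<And>h. 0 < h \<Longrightarrow> h < e \<Longrightarrow> f t < f (t - h)"
    using DERIV_neg_dec_left[OF D] by force
  define h where "h = min (e/2) (\<delta>/2)"
  have "0 < h" "h < e" "h < \<delta>" unfolding h_def using \<open>e > 0\<close> \<open>\<delta> > 0\<close> by auto
  then show False using dec[of h] max[of "t - h"] by auto
qed

lemma weighted_positive_max_in_interior:
  fixes w :: "real \<Rightarrow> real \<Rightarrow> real"
  assumes cont: "continuous_on ({0..R} \<times> {0..}) (\<lambda>(r,t). w r t)"
    and lateral: "\<And>t. t > 0 \<Longrightarrow> w 0 t = 0 \<and> w R t = 0"
    and initial: "\<And>r. r \<in> {0..R} \<Longrightarrow> w r 0 = 0"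
    and r1: "r1 \<in> {0..R}" and t1: "t1 \<ge> 0" and pos: "w r1 t1 > 0"
  obtains r0 t0 where "(r0,t0) \<in> dom_int R" "w r0 t0 > 0"
    "\<And>r t. r \<in> {0..R} \<Longrightarrow> t \<in> {0..t0} \<Longrightarrow> exp (-t) * w r t \<le> exp (-t0) * w r0 t0"
proof -
  define K where "K = {0..R} \<times> {0..t1}"
  have "continuous_on K (\<lambda>(r,t). exp (-t) * w r t)"
  proof -
    have "continuous_on K (\<lambda>(r,t). w r t)"
      by (rule continuous_on_subset[OF cont]) (auto simp: K_def)
    then have "continuous_on K (\<lambda>p. exp (- snd p) * (\<lambda>(r,t). w r t) p)"
      by (intro continuous_intros)
    then show ?thesis by (simp add: case_prod_beta)
  qed
  moreover have "compact K" unfolding K_def by (intro compact_Times compact_Icc)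
  moreover have "(r1,t1) \<in> K" unfolding K_def using r1 t1 by auto
  ultimately obtain r0 t0 where K0: "(r0,t0) \<in> K"
    and max: "\<And>r t. (r,t) \<in> K \<Longrightarrow> exp (-t) * w r t \<le> exp (-t0) * w r0 t0"
    using continuous_attains_sup[of K "\<lambda>(r,t). exp (-t) * w r t"] by fastforce
  have "0 < exp (-t1) * w r1 t1" using pos by simp
  also have "\<dots> \<le> exp (-t0) * w r0 t0" using max \<open>(r1,t1) \<in> K\<close> .
  finally have w0: "w r0 t0 > 0" by (simp add: zero_less_mult_iff)
  have "t0 \<noteq> 0" using w0 initial K0 by (auto simp: K_def)
  then have "t0 > 0" using K0 by (simp add: K_def)
  then have "r0 \<noteq> 0" "r0 \<noteq> R" using w0 lateral by auto
  then have "(r0,t0) \<in> dom_int R" using K0 \<open>t0 > 0\<close> by (auto simp: K_def dom_int_def)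
  moreover have "\<And>r t. r \<in> {0..R} \<Longrightarrow> t \<in> {0..t0} \<Longrightarrow> exp (-t) * w r t \<le> exp (-t0) * w r0 t0"
    using max K0 by (auto simp: K_def)
  ultimately show thesis using that w0 by blast
qed

lemma weighted_max_conditions:
  fixes w :: "real \<Rightarrow> real \<Rightarrow> real" and wr :: "real \<Rightarrow> real"
  assumes r0: "0 < r0" "r0 < R" and "0 < t0"
    and wr: "\<And>y. 0 < y \<Longrightarrow> y < R \<Longrightarrow> ((\<lambda>y. w y t0) has_real_derivative wr y) (at y)"
    and wrr: "(wr has_real_derivative wrr) (at r0)"
    and wt: "((\<lambda>s. w r0 s) has_real_derivative wt) (at t0)"
    and max: "\<And>r t. r \<in> {0..R} \<Longrightarrow> t \<in> {0..t0} \<Longrightarrow> exp (-t) * w r t \<le> exp (-t0) * w r0 t0"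
  shows "wr r0 = 0" and "wrr \<le> 0" and "w r0 t0 \<le> wt"
proof -
  from DERIV_interior_max[OF r0 wr wrr] max[of _ t0] \<open>0 < t0\<close>
  show "wr r0 = 0" "wrr \<le> 0" by auto
  have "exp (-t0) * wt - exp (-t0) * w r0 t0 \<ge> 0"
  proof (rule DERIV_left_max_nonneg[OF _ \<open>0 < t0\<close>])
    show "((\<lambda>s. exp (-s) * w r0 s) has_real_derivative
        exp (-t0) * wt - exp (-t0) * w r0 t0) (at t0)"
      using wt by (auto intro!: derivative_eq_intros simp: algebra_simps)
    show "\<And>s. t0 - t0 < s \<Longrightarrow> s \<le> t0 \<Longrightarrow> exp (-s) * w r0 s \<le> exp (-t0) * w r0 t0"
      using max r0 by simp
  qed
  then show "w r0 t0 \<le> wt"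
    by (simp add: right_diff_distrib[symmetric] zero_le_mult_iff)
qed

lemma radial_solutionE:
  assumes "radial_solution n R u0 u"
  obtains ur urr ut where
    "\<And>r t. (r,t) \<in> dom_int R \<Longrightarrow> ((\<lambda>s. u s t) has_real_derivative ur r t) (at r)"
    "\<And>r t. (r,t) \<in> dom_int R \<Longrightarrow> ((\<lambda>s. ur s t) has_real_derivative urr r t) (at r)"
    "\<And>r t. (r,t) \<in> dom_int R \<Longrightarrow> ((\<lambda>s. u r s) has_real_derivative ut r t) (at t)"
    "\<And>r t. (r,t) \<in> dom_int R \<Longrightarrow>
       ut r t = urr r t + (real n - 1) / r * ur r t + u r t * (ur r t) ^ 3"
    "\<And>r t. (r,t) \<in> dom_int R \<Longrightarrow> ur r t \<le> 0"
proof -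
  from assms obtain ur urr ut where "\<forall>(r,t)\<in>dom_int R.
      ((\<lambda>s. u s t) has_real_derivative ur r t) (at r) \<and>
      ((\<lambda>s. ur s t) has_real_derivative urr r t) (at r) \<and>
      ((\<lambda>s. u r s) has_real_derivative ut r t) (at t) \<and>
      ut r t = urr r t + (real n - 1) / r * ur r t + u r t * (ur r t) ^ 3 \<and> ur r t \<le> 0"
    unfolding radial_solution_def by blast
  then show thesis by (intro that[of ur urr ut]) auto
qed

lemma radial_solution_le:
  assumes su: "radial_solution n R u0 u" and sv: "radial_solution n R u0 v"
    and r1: "r1 \<in> {0..R}" and t1: "t1 \<ge> 0"
  shows "u r1 t1 \<le> v r1 t1"
proof (rule ccontr)
  assume "\<not> u r1 t1 \<le> v r1 t1"
  define w where "w r t = u r t - v r t" for r t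
  have "continuous_on ({0..R} \<times> {0..}) (\<lambda>(r,t). w r t)"
  proof -
    have "continuous_on ({0..R} \<times> {0..}) (\<lambda>p. (\<lambda>(r,t). u r t) p - (\<lambda>(r,t). v r t) p)"
      using su sv unfolding radial_solution_def by (intro continuous_on_diff) auto
    then show ?thesis by (simp add: w_def case_prod_beta)
  qed
  moreover have "\<And>t. t > 0 \<Longrightarrow> w 0 t = 0 \<and> w R t = 0" "\<And>r. r \<in> {0..R} \<Longrightarrow> w r 0 = 0"
    using su sv unfolding radial_solution_def w_def by auto
  moreover have "w r1 t1 > 0" using \<open>\<not> u r1 t1 \<le> v r1 t1\<close> by (simp add: w_def)
  ultimately obtain r0 t0 where D0: "(r0,t0) \<in> dom_int R" and w0: "w r0 t0 > 0"
    and max: "\<And>r t. r \<in> {0..R} \<Longrightarrow> t \<in> {0..t0} \<Longrightarrow> exp (-t) * w r t \<le> exp (-t0) * w r0 t0"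
    using weighted_positive_max_in_interior[of R w r1 t1] r1 t1 by blast
  have r0: "0 < r0" "r0 < R" and "t0 > 0" using D0 by (auto simp: dom_int_def)
  obtain ur urr ut where
    ur: "\<And>r t. (r,t) \<in> dom_int R \<Longrightarrow> ((\<lambda>s. u s t) has_real_derivative ur r t) (at r)"
    and urr: "\<And>r t. (r,t) \<in> dom_int R \<Longrightarrow> ((\<lambda>s. ur s t) has_real_derivative urr r t) (at r)"
    and ut: "\<And>r t. (r,t) \<in> dom_int R \<Longrightarrow> ((\<lambda>s. u r s) has_real_derivative ut r t) (at t)"
    and u_pde: "\<And>r t. (r,t) \<in> dom_int R \<Longrightarrow>
       ut r t = urr r t + (real n - 1) / r * ur r t + u r t * (ur r t) ^ 3"
    and ur_nonpos: "\<And>r t. (r,t) \<in> dom_int R \<Longrightarrow> ur r t \<le> 0"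
    by (rule radial_solutionE[OF su]) (rule that)
  obtain vr vrr vt where
    vr: "\<And>r t. (r,t) \<in> dom_int R \<Longrightarrow> ((\<lambda>s. v s t) has_real_derivative vr r t) (at r)"
    and vrr: "\<And>r t. (r,t) \<in> dom_int R \<Longrightarrow> ((\<lambda>s. vr s t) has_real_derivative vrr r t) (at r)"
    and vt: "\<And>r t. (r,t) \<in> dom_int R \<Longrightarrow> ((\<lambda>s. v r s) has_real_derivative vt r t) (at t)"
    and v_pde: "\<And>r t. (r,t) \<in> dom_int R \<Longrightarrow>
       vt r t = vrr r t + (real n - 1) / r * vr r t + v r t * (vr r t) ^ 3"
    by (rule radial_solutionE[OF sv]) (rule that)
  have slice: "(y,t0) \<in> dom_int R" if "0 < y" "y < R" for y
    using that \<open>t0 > 0\<close> by (simp add: dom_int_def)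
  have wr: "((\<lambda>y. w y t0) has_real_derivative ur y t0 - vr y t0) (at y)"
    if "0 < y" "y < R" for y
    unfolding w_def using ur vr slice[OF that] by (intro DERIV_diff)
  have wrr: "((\<lambda>y. ur y t0 - vr y t0) has_real_derivative urr r0 t0 - vrr r0 t0) (at r0)"
    using urr vrr D0 by (intro DERIV_diff)
  have wt: "((\<lambda>s. w r0 s) has_real_derivative ut r0 t0 - vt r0 t0) (at t0)"
    unfolding w_def using ut vt D0 by (intro DERIV_diff)
  note conditions = weighted_max_conditions[where w = w, OF r0 \<open>t0 > 0\<close> wr wrr wt max]
  have same_slope: "vr r0 t0 = ur r0 t0" using conditions(1) by simp
  have pde: "ut r0 t0 - vt r0 t0 = (urr r0 t0 - vrr r0 t0) + w r0 t0 * (ur r0 t0) ^ 3"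
    using u_pde[OF D0] v_pde[OF D0] same_slope by (simp add: w_def algebra_simps)
  have "w r0 t0 * (ur r0 t0) ^ 3 \<le> 0"
    using w0 ur_nonpos[OF D0] by (simp add: mult_nonneg_nonpos power3_eq_cube mult_nonpos_nonpos)
  with pde conditions(2,3) w0 show False by linarith
qed

theorem mainTheorem12:
  fixes n :: nat and R :: real and u0 :: "real \<Rightarrow> real"
    and u v :: "real \<Rightarrow> real \<Rightarrow> real"
  assumes "R > 0" and "n \<ge> 2"
    and "radial_solution n R u0 u"
    and "radial_solution n R u0 v"
  shows "\<forall>r\<in>{0..R}. \<forall>t\<ge>0. u r t = v r t"
  using radial_solution_le[OF assms(3,4)] radial_solution_le[OF assms(4,3)]
  by (meson order_antisym)

end
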